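(* There exists a full amicable orthogonal design $AOD\big(48;\ 4,10,34;\ 4,44\big)$.
   Context: An orthogonal design $OD(m;c_1,\ldots,c_k)$ is an $m\times m$ matrix $X$ with entries from $\{0,\pm x_1,\ldots,\pm x_k\}$, where $x_1,\ldots,x_k$ are commuting indeterminates, such that $XX^{\rm T}=(\sum_j c_jx_j^2)I_m$. An amicable orthogonal design $AOD(m;c_1,\ldots,c_k;d_1,\ldots,d_\ell)$ is a pair $(X;Y)$ where $X$ is an $OD(m;c_1,\ldots,c_k)$ in indeterminates $x_1,\ldots,x_k$, $Y$ is an $OD(m;d_1,\ldots,d_\ell)$ in indeterminates $y_1,\ldots,y_\ell$ disjoint from the $x_i$, and $XY^{\rm T}=YX^{\rm T}$. It is full if neither $X$ nor $Y$ has a zero entry. *)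

theory Defs
  imports Main "HOL.Real"
begin

text \<open>A design matrix of order m is encoded as a function X :: nat => nat => int
  (only indices i, j < m matter). An entry 0 means the zero entry; an entry
  t > 0 means +x_t, and an entry -t means -x_t (variables are numbered 1..k).
  The identity in commuting indeterminates is expressed as an identity holding
  for all real values of the indeterminates (equivalent to a polynomial identity).\<close>

definition entry_val :: "(nat \<Rightarrow> real) \<Rightarrow> int \<Rightarrow> real" where
  "entry_val x e = (if e = 0 then 0 else of_int (sgn e) * x (nat \<bar>e\<bar>))"

definition is_OD :: "nat \<Rightarrow> nat list \<Rightarrow> (nat \<Rightarrow> nat \<Rightarrow> int) \<Rightarrow> bool" where
  "is_OD m c X \<longleftrightarrow>
     (\<forall>i<m. \<forall>j<m. \<bar>X i j\<bar> \<le> int (length c)) \<and>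
     (\<forall>x::nat \<Rightarrow> real. \<forall>i<m. \<forall>j<m.
        (\<Sum>l<m. entry_val x (X i l) * entry_val x (X j l)) =
        (if i = j then (\<Sum>t<length c. of_nat (c ! t) * (x (Suc t))\<^sup>2) else 0))"

definition is_AOD :: "nat \<Rightarrow> nat list \<Rightarrow> nat list \<Rightarrow>
    (nat \<Rightarrow> nat \<Rightarrow> int) \<Rightarrow> (nat \<Rightarrow> nat \<Rightarrow> int) \<Rightarrow> bool" where
  "is_AOD m c d X Y \<longleftrightarrow> is_OD m c X \<and> is_OD m d Y \<and>
     (\<forall>(x::nat \<Rightarrow> real) (y::nat \<Rightarrow> real). \<forall>i<m. \<forall>j<m.
        (\<Sum>l<m. entry_val x (X i l) * entry_val y (Y j l)) =
        (\<Sum>l<m. entry_val y (Y i l) * entry_val x (X j l)))"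

definition is_full :: "nat \<Rightarrow> (nat \<Rightarrow> nat \<Rightarrow> int) \<Rightarrow> (nat \<Rightarrow> nat \<Rightarrow> int) \<Rightarrow> bool" where
  "is_full m X Y \<longleftrightarrow> (\<forall>i<m. \<forall>j<m. X i j \<noteq> 0 \<and> Y i j \<noteq> 0)"

end

theory Submission
  imports Defs
begin

text \<open>
  Take \<open>X = I \<otimes> A + S\<^sub>5 \<otimes> B + S\<^sub>6 \<otimes> C\<close> and \<open>Y = -I \<otimes> D + S\<^sub>1\<^sub>1 \<otimes> E\<close>, where \<open>S\<^sub>w\<close> is a
  skew-symmetric weighing matrix of order 12 and weight \<open>w\<close>, the patterns \<open>I, S\<^sub>5, S\<^sub>6\<close>
  (and likewise \<open>I, S\<^sub>1\<^sub>1\<close>) have disjoint supports covering all positions, and \<open>A, \<dots>, E\<close>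
  are \<open>4 \<times> 4\<close> designs. Disjointness makes every entry of \<open>\<Sum> P\<^sub>u \<otimes> M\<^sub>u\<close> a signed entry of a
  single \<open>M\<^sub>u\<close>, so \<open>X X\<^sup>T = \<Sum>\<^sub>u\<^sub>,\<^sub>v P\<^sub>u P\<^sub>v\<^sup>T \<otimes> M\<^sub>u M\<^sub>v\<^sup>T\<close>. The patterns are pairwise
  anti-amicable and the blocks pairwise amicable, so the cross terms cancel, leaving
  \<open>1 \<cdot> 4x\<^sub>1\<^sup>2 + 5 (2x\<^sub>2\<^sup>2 + 2x\<^sub>3\<^sup>2) + 6 \<cdot> 4x\<^sub>3\<^sup>2\<close>; likewise \<open>Y Y\<^sup>T = (4y\<^sub>1\<^sup>2 + 11 \<cdot> 4y\<^sub>2\<^sup>2) I\<close>.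
  In \<open>X Y\<^sup>T = Y X\<^sup>T\<close> each term matches its transpose, since every pattern pair and the
  corresponding block pair are amicable or anti-amicable with the same sign.
\<close>

definition row_inner :: "nat \<Rightarrow> (nat \<Rightarrow> nat \<Rightarrow> int) \<Rightarrow> (nat \<Rightarrow> nat \<Rightarrow> int) \<Rightarrow> nat \<Rightarrow> nat \<Rightarrow> int"
  where "row_inner n A B i j = (\<Sum>l<n. A i l * B j l)"

definition design_row_inner :: "nat \<Rightarrow> (nat \<Rightarrow> real) \<Rightarrow> (nat \<Rightarrow> real) \<Rightarrow>
    (nat \<Rightarrow> nat \<Rightarrow> int) \<Rightarrow> (nat \<Rightarrow> nat \<Rightarrow> int) \<Rightarrow> nat \<Rightarrow> nat \<Rightarrow> real"
  where "design_row_inner m x y A B i j = (\<Sum>l<m. entry_val x (A i l) * entry_val y (B j l))"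

definition weighing :: "nat \<Rightarrow> int \<Rightarrow> (nat \<Rightarrow> nat \<Rightarrow> int) \<Rightarrow> bool"
  where "weighing n w P \<longleftrightarrow> (\<forall>i<n. \<forall>j<n. row_inner n P P i j = (if i = j then w else 0))"

definition signed_amicable :: "nat \<Rightarrow> int \<Rightarrow> (nat \<Rightarrow> nat \<Rightarrow> int) \<Rightarrow> (nat \<Rightarrow> nat \<Rightarrow> int) \<Rightarrow> bool"
  where "signed_amicable n s A B \<longleftrightarrow> (\<forall>i<n. \<forall>j<n. row_inner n A B i j = s * row_inner n B A i j)"

definition orthogonal_at :: "nat \<Rightarrow> real \<Rightarrow> (nat \<Rightarrow> real) \<Rightarrow> (nat \<Rightarrow> nat \<Rightarrow> int) \<Rightarrow> bool"
  where "orthogonal_at m c x M \<longleftrightarrow>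
    (\<forall>i<m. \<forall>j<m. design_row_inner m x x M M i j = (if i = j then c else 0))"

definition signed_amicable_at :: "nat \<Rightarrow> int \<Rightarrow> (nat \<Rightarrow> real) \<Rightarrow> (nat \<Rightarrow> real) \<Rightarrow>
    (nat \<Rightarrow> nat \<Rightarrow> int) \<Rightarrow> (nat \<Rightarrow> nat \<Rightarrow> int) \<Rightarrow> bool"
  where "signed_amicable_at m s x y A B \<longleftrightarrow>
    (\<forall>i<m. \<forall>j<m. design_row_inner m x y A B i j = of_int s * design_row_inner m y x B A i j)"

definition disjoint_ternary :: "nat \<Rightarrow> nat \<Rightarrow> (nat \<Rightarrow> nat \<Rightarrow> nat \<Rightarrow> int) \<Rightarrow> bool"
  where "disjoint_ternary n k P \<longleftrightarrow>
    (\<forall>i<n. \<forall>j<n. \<forall>u<k. P u i j \<in> {-1, 0, 1} \<and> (\<forall>v<k. v \<noteq> u \<longrightarrow> P u i j = 0 \<or> P v i j = 0))"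

text \<open>\<open>\<Sum>\<^sub>u\<^sub><\<^sub>k P\<^sub>u \<otimes> M\<^sub>u\<close> for \<open>m \<times> m\<close> blocks \<open>M\<^sub>u\<close>; index \<open>i\<close> stands for the pair
  \<open>(i div m, i mod m)\<close> of a pattern index and a block index.\<close>

definition kron_sum :: "nat \<Rightarrow> nat \<Rightarrow> (nat \<Rightarrow> nat \<Rightarrow> nat \<Rightarrow> int) \<Rightarrow> (nat \<Rightarrow> nat \<Rightarrow> nat \<Rightarrow> int) \<Rightarrow>
    nat \<Rightarrow> nat \<Rightarrow> int"
  where "kron_sum m k P M i j = (\<Sum>u<k. P u (i div m) (j div m) * M u (i mod m) (j mod m))"

lemma sum_lessThan_single:
  fixes k :: nat
  assumes "u < k" and "\<forall>v<k. v \<noteq> u \<longrightarrow> f v = 0"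
  shows "(\<Sum>v<k. f v) = f u"
proof -
  have "(\<Sum>v<k. f v) = (\<Sum>v\<in>{u}. f v)"
    by (rule sum.mono_neutral_right) (use assms in auto)
  then show ?thesis by simp
qed

lemma sum_lessThan_mult_split:
  fixes f :: "nat \<Rightarrow> 'a::comm_monoid_add"
  shows "(\<Sum>l<n * m. f l) = (\<Sum>L<n. \<Sum>a<m. f (L * m + a))"
proof -
  have "(\<Sum>l\<in>{L * m..<L * m + m}. f l) = (\<Sum>a<m. f (L * m + a))" for L
    using sum.shift_bounds_nat_ivl[of f 0 "L * m" m] by (simp add: atLeast0LessThan add.commute)
  then show ?thesis by (simp add: sum.nat_group[symmetric])
qed

lemma sum_lessThan_mult_div_mod:
  fixes f g :: "nat \<Rightarrow> 'a::comm_semiring_0"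
  assumes "m > 0"
  shows "(\<Sum>l<n * m. f (l div m) * g (l mod m)) = (\<Sum>L<n. f L) * (\<Sum>a<m. g a)"
proof -
  have "(\<Sum>a<m. f ((L * m + a) div m) * g ((L * m + a) mod m)) = (\<Sum>a<m. f L * g a)" for L
    by (rule sum.cong) (use assms in auto)
  then show ?thesis
    by (simp only: sum_lessThan_mult_split sum_product)
qed

lemma sum_sum_antisymmetric:
  fixes c :: "nat \<Rightarrow> nat \<Rightarrow> 'a::ab_group_add"
  assumes "\<forall>u<k. \<forall>v<k. u \<noteq> v \<longrightarrow> c u v = - c v u"
  shows "(\<Sum>u<k. \<Sum>v<k. c u v) = (\<Sum>u<k. c u u)"
  using assms
proof (induction k)
  case 0
  then show ?case by simp
next
  case (Suc k)
  have IH: "(\<Sum>u<k. \<Sum>v<k. c u v) = (\<Sum>u<k. c u u)"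
    using Suc.IH Suc.prems less_SucI by blast
  have "c u k = - c k u" if "u < k" for u
    using Suc.prems that less_SucI[OF that] lessI[of k] by blast
  then have cross: "(\<Sum>u<k. c u k) = - (\<Sum>v<k. c k v)"
    by (simp add: sum_negf[symmetric])
  have "(\<Sum>u<Suc k. \<Sum>v<Suc k. c u v) =
      (\<Sum>u<k. \<Sum>v<k. c u v) + ((\<Sum>u<k. c u k) + (\<Sum>v<k. c k v)) + c k k"
    by (simp add: sum.distrib add.assoc)
  then show ?case
    using IH cross by simp
qed

lemma entry_val_ternary_mult:
  assumes "s \<in> {-1, 0, 1}"
  shows "entry_val x (s * e) = of_int s * entry_val x e"
  using assms by (auto simp: entry_val_def sgn_mult abs_mult)

lemma entry_val_disjoint_sum:
  fixes k :: nat
  assumes "\<forall>u<k. p u \<in> {-1, 0, 1} \<and> (\<forall>v<k. v \<noteq> u \<longrightarrow> p u = 0 \<or> p v = 0)"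
  shows "entry_val x (\<Sum>u<k. p u * e u) = (\<Sum>u<k. of_int (p u) * entry_val x (e u))"
proof (cases "\<exists>u<k. p u \<noteq> 0")
  case False
  then show ?thesis by (simp add: entry_val_def)
next
  case True
  then obtain u where u: "u < k" "p u \<noteq> 0" by blast
  with assms have "\<forall>v<k. v \<noteq> u \<longrightarrow> p v = 0" and "p u \<in> {-1, 0, 1}" by blast+
  with u show ?thesis
    by (simp add: sum_lessThan_single[of u k] entry_val_ternary_mult)
qed

lemma div_mod_less_of_less_mult:
  fixes i n m :: nat
  assumes "i < n * m"
  shows "i div m < n" and "i mod m < m"
proof -
  have "m > 0" using assms by (cases m) auto
  then show "i div m < n" and "i mod m < m"
    using assms by (simp_all add: less_mult_imp_div_less)
qed

lemma div_mod_eq_iff: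
  fixes m :: nat
  shows "i div m = j div m \<and> i mod m = j mod m \<longleftrightarrow> i = j"
  by (metis div_mult_mod_eq)

lemma kron_sum_row_inner:
  assumes P: "disjoint_ternary n kA P" and Q: "disjoint_ternary n kB Q"
    and i: "i < n * m" and j: "j < n * m"
  shows "design_row_inner (n * m) x y (kron_sum m kA P M) (kron_sum m kB Q N) i j =
    (\<Sum>u<kA. \<Sum>v<kB. of_int (row_inner n (P u) (Q v) (i div m) (j div m)) *
                      design_row_inner m x y (M u) (N v) (i mod m) (j mod m))"
proof -
  have m: "m > 0" using i by (cases m) auto
  have I: "i div m < n" and J: "j div m < n"
    using div_mod_less_of_less_mult i j by blast+
  have entry: "entry_val x (kron_sum m kA P M i l) * entry_val y (kron_sum m kB Q N j l) =
      (\<Sum>u<kA. \<Sum>v<kB. of_int (P u (i div m) (l div m) * Q v (j div m) (l div m)) *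
         (entry_val x (M u (i mod m) (l mod m)) * entry_val y (N v (j mod m) (l mod m))))"
    if "l < n * m" for l
  proof -
    have L: "l div m < n" using div_mod_less_of_less_mult(1)[OF that] .
    have "entry_val x (kron_sum m kA P M i l) =
        (\<Sum>u<kA. of_int (P u (i div m) (l div m)) * entry_val x (M u (i mod m) (l mod m)))"
      unfolding kron_sum_def by (rule entry_val_disjoint_sum) (use P I L in \<open>simp add: disjoint_ternary_def\<close>)
    moreover have "entry_val y (kron_sum m kB Q N j l) =
        (\<Sum>v<kB. of_int (Q v (j div m) (l div m)) * entry_val y (N v (j mod m) (l mod m)))"
      unfolding kron_sum_def by (rule entry_val_disjoint_sum) (use Q J L in \<open>simp add: disjoint_ternary_def\<close>)
    ultimately show ?thesis
      by (simp add: sum_product mult_ac)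
  qed
  have "design_row_inner (n * m) x y (kron_sum m kA P M) (kron_sum m kB Q N) i j =
      (\<Sum>l<n * m. \<Sum>u<kA. \<Sum>v<kB. of_int (P u (i div m) (l div m) * Q v (j div m) (l div m)) *
         (entry_val x (M u (i mod m) (l mod m)) * entry_val y (N v (j mod m) (l mod m))))"
    unfolding design_row_inner_def by (rule sum.cong) (simp_all add: entry)
  also have "\<dots> = (\<Sum>u<kA. \<Sum>v<kB. \<Sum>l<n * m.
      of_int (P u (i div m) (l div m) * Q v (j div m) (l div m)) *
         (entry_val x (M u (i mod m) (l mod m)) * entry_val y (N v (j mod m) (l mod m))))"
    by (simp only: sum.swap[of _ "{..<n * m}"])
  also have "\<dots> = (\<Sum>u<kA. \<Sum>v<kB. of_int (row_inner n (P u) (Q v) (i div m) (j div m)) *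
                      design_row_inner m x y (M u) (N v) (i mod m) (j mod m))"
    unfolding row_inner_def design_row_inner_def
    by (simp only: of_int_sum sum_lessThan_mult_div_mod[OF m, symmetric])
  finally show ?thesis .
qed

lemma kron_sum_orthogonal:
  assumes P: "disjoint_ternary n k P"
    and diag: "\<forall>u<k. weighing n (w u) (P u) \<and> orthogonal_at m (c u) x (M u)"
    and off_diag: "\<forall>u<k. \<forall>v<k. u \<noteq> v \<longrightarrow> s u v \<in> {-1, 1} \<and>
      signed_amicable n (s u v) (P u) (P v) \<and> signed_amicable_at m (- s u v) x x (M u) (M v)"
    and i: "i < n * m" and j: "j < n * m"
  shows "design_row_inner (n * m) x x (kron_sum m k P M) (kron_sum m k P M) i j =
    (if i = j then \<Sum>u<k. of_int (w u) * c u else 0)"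
proof -
  define I J a b where "I = i div m" and "J = j div m" and "a = i mod m" and "b = j mod m"
  have bounds: "I < n" "J < n" "a < m" "b < m"
    using div_mod_less_of_less_mult[OF i] div_mod_less_of_less_mult[OF j]
    by (simp_all add: I_def J_def a_def b_def)
  define t where "t u v = of_int (row_inner n (P u) (P v) I J) * design_row_inner m x x (M u) (M v) a b" for u v
  have "t u v = - t v u" if "u < k" "v < k" "u \<noteq> v" for u v
  proof -
    from off_diag that have "s u v \<in> {-1, 1}"
      and P_uv: "signed_amicable n (s u v) (P u) (P v)"
      and M_uv: "signed_amicable_at m (- s u v) x x (M u) (M v)" by blast+
    from this(1) have "s u v * s u v = 1" by auto
    moreover have "row_inner n (P u) (P v) I J = s u v * row_inner n (P v) (P u) I J"
      using P_uv bounds by (simp add: signed_amicable_def)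
    moreover have "design_row_inner m x x (M u) (M v) a b =
        - of_int (s u v) * design_row_inner m x x (M v) (M u) a b"
      using M_uv bounds by (simp add: signed_amicable_at_def)
    ultimately show ?thesis
      unfolding t_def by (simp add: algebra_simps flip: of_int_mult)
  qed
  then have "(\<Sum>u<k. \<Sum>v<k. t u v) = (\<Sum>u<k. t u u)"
    by (intro sum_sum_antisymmetric) blast
  also have "\<dots> = (\<Sum>u<k. if I = J \<and> a = b then of_int (w u) * c u else 0)"
    using diag bounds by (intro sum.cong) (auto simp: t_def weighing_def orthogonal_at_def)
  also have "\<dots> = (if i = j then \<Sum>u<k. of_int (w u) * c u else 0)"
    using div_mod_eq_iff[where m = m] by (simp add: I_def J_def a_def b_def)
  finally show ?thesis
    unfolding kron_sum_row_inner[OF P P i j] by (simp add: t_def I_def J_def a_def b_def)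
qed

lemma kron_sum_amicable:
  assumes P: "disjoint_ternary n kA P" and Q: "disjoint_ternary n kB Q"
    and amicable: "\<forall>u<kA. \<forall>v<kB. s u v \<in> {-1, 1} \<and>
      signed_amicable n (s u v) (P u) (Q v) \<and> signed_amicable_at m (s u v) x y (M u) (N v)"
    and i: "i < n * m" and j: "j < n * m"
  shows "design_row_inner (n * m) x y (kron_sum m kA P M) (kron_sum m kB Q N) i j =
    design_row_inner (n * m) y x (kron_sum m kB Q N) (kron_sum m kA P M) i j"
proof -
  define I J a b where "I = i div m" and "J = j div m" and "a = i mod m" and "b = j mod m"
  have bounds: "I < n" "J < n" "a < m" "b < m"
    using div_mod_less_of_less_mult[OF i] div_mod_less_of_less_mult[OF j]
    by (simp_all add: I_def J_def a_def b_def)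
  have "of_int (row_inner n (P u) (Q v) I J) * design_row_inner m x y (M u) (N v) a b =
      of_int (row_inner n (Q v) (P u) I J) * design_row_inner m y x (N v) (M u) a b"
    if "u < kA" "v < kB" for u v
  proof -
    from amicable that have "s u v \<in> {-1, 1}"
      and PQ: "signed_amicable n (s u v) (P u) (Q v)"
      and MN: "signed_amicable_at m (s u v) x y (M u) (N v)" by blast+
    from this(1) have "s u v * s u v = 1" by auto
    moreover have "row_inner n (P u) (Q v) I J = s u v * row_inner n (Q v) (P u) I J"
      using PQ bounds by (simp add: signed_amicable_def)
    moreover have "design_row_inner m x y (M u) (N v) a b =
        of_int (s u v) * design_row_inner m y x (N v) (M u) a b"
      using MN bounds by (simp add: signed_amicable_at_def)
    ultimately show ?thesis
      by (simp add: algebra_simps flip: of_int_mult)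
  qed
  then show ?thesis
    unfolding kron_sum_row_inner[OF P Q i j] kron_sum_row_inner[OF Q P i j]
    by (subst sum.swap) (simp add: I_def J_def a_def b_def)
qed

lemma kron_sum_entry:
  assumes P: "disjoint_ternary n k P" and cover: "\<forall>i<n. \<forall>j<n. \<exists>u<k. P u i j \<noteq> 0"
    and M: "\<forall>u<k. \<forall>a<m. \<forall>b<m. M u a b \<noteq> 0 \<and> \<bar>M u a b\<bar> \<le> r"
    and i: "i < n * m" and j: "j < n * m"
  shows "kron_sum m k P M i j \<noteq> 0 \<and> \<bar>kron_sum m k P M i j\<bar> \<le> r"
proof -
  define I J a b where "I = i div m" and "J = j div m" and "a = i mod m" and "b = j mod m"
  have bounds: "I < n" "J < n" "a < m" "b < m"
    using div_mod_less_of_less_mult[OF i] div_mod_less_of_less_mult[OF j]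
    by (simp_all add: I_def J_def a_def b_def)
  obtain u where u: "u < k" "P u I J \<noteq> 0"
    using cover bounds by blast
  with P bounds have others: "\<forall>v<k. v \<noteq> u \<longrightarrow> P v I J = 0" and "\<bar>P u I J\<bar> = 1"
    unfolding disjoint_ternary_def by fastforce+
  then have "\<bar>kron_sum m k P M i j\<bar> = \<bar>M u a b\<bar>"
    unfolding kron_sum_def I_def J_def a_def b_def
    by (simp add: sum_lessThan_single[OF u(1)] abs_mult)
  moreover have "M u a b \<noteq> 0" and "\<bar>M u a b\<bar> \<le> r"
    using M u bounds by blast+
  ultimately show ?thesis
    by (metis abs_eq_0)
qed

lemma all_less_iff_list_all: "(\<forall>i<n. P i) \<longleftrightarrow> list_all P [0..<n]"
  by (auto simp: list_all_iff)

lemma ex_less_iff_list_ex: "(\<exists>i<n. P i) \<longleftrightarrow> list_ex P [0..<n]"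
  by (auto simp: list_ex_iff)

definition of_rows :: "int list list \<Rightarrow> nat \<Rightarrow> nat \<Rightarrow> int"
  where "of_rows rs i j = rs ! i ! j"

definition id_mat :: "nat \<Rightarrow> nat \<Rightarrow> int"
  where "id_mat i j = (if i = j then 1 else 0)"

definition skew_weighing_5 :: "int list list" where
  "skew_weighing_5 =
    [[ 0,  1, -1,  0,  1,  1,  0,  0,  1,  0,  0,  0],
     [-1,  0,  1,  1,  1,  0,  0,  1,  0,  0,  0,  0],
     [ 1, -1,  0,  1,  0,  1,  1,  0,  0,  0,  0,  0],
     [ 0, -1, -1,  0,  1, -1,  0,  0,  0,  0,  0, -1],
     [-1, -1,  0, -1,  0,  1,  0,  0,  0,  0, -1,  0],
     [-1,  0, -1,  1, -1,  0,  0,  0,  0, -1,  0,  0],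
     [ 0,  0, -1,  0,  0,  0,  0,  1, -1,  1,  0,  1],
     [ 0, -1,  0,  0,  0,  0, -1,  0,  1,  0,  1,  1],
     [-1,  0,  0,  0,  0,  0,  1, -1,  0,  1,  1,  0],
     [ 0,  0,  0,  0,  0,  1, -1,  0, -1,  0,  1, -1],
     [ 0,  0,  0,  0,  1,  0,  0, -1, -1, -1,  0,  1],
     [ 0,  0,  0,  1,  0,  0, -1, -1,  0,  1, -1,  0]]"

definition skew_weighing_6 :: "int list list" where
  "skew_weighing_6 =
    [[ 0,  0,  0,  1,  0,  0, -1, -1,  0, -1,  1,  1],
     [ 0,  0,  0,  0,  0,  1, -1,  0, -1,  1,  1, -1],
     [ 0,  0,  0,  0,  1,  0,  0, -1, -1,  1, -1,  1],
     [-1,  0,  0,  0,  0,  0,  1, -1,  1,  1,  1,  0],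
     [ 0,  0, -1,  0,  0,  0, -1,  1,  1,  1,  0,  1],
     [ 0, -1,  0,  0,  0,  0,  1,  1, -1,  0,  1,  1],
     [ 1,  1,  0, -1,  1, -1,  0,  0,  0,  0,  1,  0],
     [ 1,  0,  1,  1, -1, -1,  0,  0,  0,  1,  0,  0],
     [ 0,  1,  1, -1, -1,  1,  0,  0,  0,  0,  0,  1],
     [ 1, -1, -1, -1, -1,  0,  0, -1,  0,  0,  0,  0],
     [-1, -1,  1, -1,  0, -1, -1,  0,  0,  0,  0,  0],
     [-1,  1, -1,  0, -1, -1,  0,  0, -1,  0,  0,  0]]"

definition skew_weighing_11 :: "int list list" where
  "skew_weighing_11 =
    [[ 0,  1,  1, -1,  1, -1,  1, -1,  1, -1,  1, -1],
     [-1,  0,  1,  1,  1, -1,  1,  1,  1,  1, -1,  1],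
     [-1, -1,  0, -1, -1, -1, -1,  1,  1,  1,  1, -1],
     [ 1, -1,  1,  0,  1,  1, -1, -1,  1,  1,  1,  1],
     [-1, -1,  1, -1,  0,  1,  1, -1, -1,  1, -1, -1],
     [ 1,  1,  1, -1, -1,  0,  1,  1, -1,  1,  1,  1],
     [-1, -1,  1,  1, -1, -1,  0, -1, -1, -1,  1,  1],
     [ 1, -1, -1,  1,  1, -1,  1,  0, -1,  1,  1, -1],
     [-1, -1, -1, -1,  1,  1,  1,  1,  0, -1,  1,  1],
     [ 1, -1, -1, -1, -1, -1,  1, -1,  1,  0, -1,  1],
     [-1,  1, -1, -1,  1, -1, -1, -1, -1,  1,  0,  1],
     [ 1, -1,  1, -1,  1, -1, -1,  1, -1, -1, -1,  0]]"

definition X_pattern :: "nat \<Rightarrow> nat \<Rightarrow> nat \<Rightarrow> int"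
  where "X_pattern = (!) [id_mat, of_rows skew_weighing_5, of_rows skew_weighing_6]"

definition Y_pattern :: "nat \<Rightarrow> nat \<Rightarrow> nat \<Rightarrow> int"
  where "Y_pattern = (!) [- id_mat, of_rows skew_weighing_11]"

definition X_block :: "nat \<Rightarrow> nat \<Rightarrow> nat \<Rightarrow> int"
  where "X_block u = of_rows
    ([[[ 1, -1,  1, -1],
       [ 1, -1, -1,  1],
       [ 1,  1,  1,  1],
       [ 1,  1, -1, -1]],

      [[ 2, -2,  3, -3],
       [-3,  3,  2, -2],
       [-2, -2, -3, -3],
       [ 3,  3, -2, -2]],

      [[ 3, -3,  3, -3],
       [ 3, -3, -3,  3],
       [-3, -3, -3, -3],
       [-3, -3,  3,  3]]] ! u)"

definition Y_block :: "nat \<Rightarrow> nat \<Rightarrow> nat \<Rightarrow> int"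
  where "Y_block u = of_rows
    ([[[ 1,  1,  1,  1],
       [ 1,  1, -1, -1],
       [ 1, -1,  1, -1],
       [ 1, -1, -1,  1]],

      [[ 2,  2,  2,  2],
       [ 2,  2, -2, -2],
       [-2,  2, -2,  2],
       [-2,  2,  2, -2]]] ! u)"

definition X48 :: "nat \<Rightarrow> nat \<Rightarrow> int"
  where "X48 = kron_sum 4 3 X_pattern X_block"

definition Y48 :: "nat \<Rightarrow> nat \<Rightarrow> int"
  where "Y48 = kron_sum 4 2 Y_pattern Y_block"

text \<open>The sign is \<open>-1\<close> exactly when one pattern is \<open>\<plusminus>I\<close> and the other skew;
  \<open>S\<^sub>5\<close> and \<open>S\<^sub>6\<close> both commute with \<open>S\<^sub>1\<^sub>1\<close>.\<close>

definition XY_sign :: "nat \<Rightarrow> nat \<Rightarrow> int"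
  where "XY_sign u v = (if (u = 0) = (v = 0) then 1 else -1)"

lemmas finite_check_simps = all_less_iff_list_all ex_less_iff_list_ex disjoint_ternary_def
  weighing_def signed_amicable_def

lemma X_pattern_disjoint_ternary: "disjoint_ternary 12 3 X_pattern"
  unfolding finite_check_simps by code_simp

lemma Y_pattern_disjoint_ternary: "disjoint_ternary 12 2 Y_pattern"
  unfolding finite_check_simps by code_simp

lemma X_pattern_covers: "\<forall>i<12. \<forall>j<12. \<exists>u<3. X_pattern u i j \<noteq> 0"
  unfolding finite_check_simps by code_simp

lemma Y_pattern_covers: "\<forall>i<12. \<forall>j<12. \<exists>u<2. Y_pattern u i j \<noteq> 0"
  unfolding finite_check_simps by code_simp

lemma X_pattern_weighing: "\<forall>u<3. weighing 12 ([1, 5, 6] ! u) (X_pattern u)"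
  unfolding finite_check_simps by code_simp

lemma Y_pattern_weighing: "\<forall>u<2. weighing 12 ([1, 11] ! u) (Y_pattern u)"
  unfolding finite_check_simps by code_simp

lemma X_pattern_anti_amicable:
  "\<forall>u<3. \<forall>v<3. u \<noteq> v \<longrightarrow> signed_amicable 12 (-1) (X_pattern u) (X_pattern v)"
  unfolding finite_check_simps by code_simp

lemma Y_pattern_anti_amicable:
  "\<forall>u<2. \<forall>v<2. u \<noteq> v \<longrightarrow> signed_amicable 12 (-1) (Y_pattern u) (Y_pattern v)"
  unfolding finite_check_simps by code_simp

lemma XY_pattern_signed_amicable:
  "\<forall>u<3. \<forall>v<2. signed_amicable 12 (XY_sign u v) (X_pattern u) (Y_pattern v)"
  unfolding finite_check_simps by code_simp

lemma X_block_entries: "\<forall>u<3. \<forall>a<4. \<forall>b<4. X_block u a b \<noteq> 0 \<and> \<bar>X_block u a b\<bar> \<le> 3"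
  unfolding finite_check_simps by code_simp

lemma Y_block_entries: "\<forall>u<2. \<forall>a<4. \<forall>b<4. Y_block u a b \<noteq> 0 \<and> \<bar>Y_block u a b\<bar> \<le> 2"
  unfolding finite_check_simps by code_simp

lemmas block_simps = orthogonal_at_def signed_amicable_at_def design_row_inner_def
  X_block_def Y_block_def of_rows_def entry_val_def

lemma X_block_orthogonal:
  "\<forall>u<3. orthogonal_at 4 ([4 * (x 1)\<^sup>2, 2 * (x 2)\<^sup>2 + 2 * (x 3)\<^sup>2, 4 * (x 3)\<^sup>2] ! u) x (X_block u)"
  unfolding block_simps by (simp add: numeral_eq_Suc All_less_Suc power2_eq_square)

lemma Y_block_orthogonal: "\<forall>u<2. orthogonal_at 4 ([4 * (y 1)\<^sup>2, 4 * (y 2)\<^sup>2] ! u) y (Y_block u)"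
  unfolding block_simps by (simp add: numeral_eq_Suc All_less_Suc power2_eq_square)

lemma X_block_amicable: "\<forall>u<3. \<forall>v<3. u \<noteq> v \<longrightarrow> signed_amicable_at 4 1 x x (X_block u) (X_block v)"
  unfolding block_simps by (simp add: numeral_eq_Suc All_less_Suc algebra_simps)

lemma Y_block_amicable: "\<forall>u<2. \<forall>v<2. u \<noteq> v \<longrightarrow> signed_amicable_at 4 1 y y (Y_block u) (Y_block v)"
  unfolding block_simps by (simp add: numeral_eq_Suc All_less_Suc algebra_simps)

lemma XY_block_signed_amicable:
  "\<forall>u<3. \<forall>v<2. signed_amicable_at 4 (XY_sign u v) x y (X_block u) (Y_block v)"
  unfolding block_simps XY_sign_def by (simp add: numeral_eq_Suc All_less_Suc algebra_simps)

lemma X48_entries: "i < 48 \<Longrightarrow> j < 48 \<Longrightarrow> X48 i j \<noteq> 0 \<and> \<bar>X48 i j\<bar> \<le> 3"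
  using kron_sum_entry[OF X_pattern_disjoint_ternary X_pattern_covers X_block_entries]
  by (simp add: X48_def)

lemma Y48_entries: "i < 48 \<Longrightarrow> j < 48 \<Longrightarrow> Y48 i j \<noteq> 0 \<and> \<bar>Y48 i j\<bar> \<le> 2"
  using kron_sum_entry[OF Y_pattern_disjoint_ternary Y_pattern_covers Y_block_entries]
  by (simp add: Y48_def)

lemma X48_OD: "is_OD 48 [4, 10, 34] X48"
  unfolding is_OD_def
proof (intro conjI allI impI)
  fix i j :: nat assume "i < 48" "j < 48"
  then show "\<bar>X48 i j\<bar> \<le> int (length [4, 10, 34 :: nat])"
    using X48_entries by simp
next
  fix x :: "nat \<Rightarrow> real" and i j :: nat assume "i < 48" "j < 48"
  then have "design_row_inner (12 * 4) x x X48 X48 i j = (if i = j then \<Sum>u<3.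
      of_int ([1, 5, 6] ! u) * ([4 * (x 1)\<^sup>2, 2 * (x 2)\<^sup>2 + 2 * (x 3)\<^sup>2, 4 * (x 3)\<^sup>2] ! u) else 0)"
    unfolding X48_def
    using X_pattern_disjoint_ternary X_pattern_weighing X_block_orthogonal X_pattern_anti_amicable
      X_block_amicable
    by (intro kron_sum_orthogonal[where s = "\<lambda>_ _. -1"]) auto
  then show "(\<Sum>l<48. entry_val x (X48 i l) * entry_val x (X48 j l)) =
      (if i = j then \<Sum>t<length [4, 10, 34 :: nat]. of_nat ([4, 10, 34] ! t) * (x (Suc t))\<^sup>2 else 0)"
    by (simp add: design_row_inner_def numeral_eq_Suc)
qed

lemma Y48_OD: "is_OD 48 [4, 44] Y48"
  unfolding is_OD_def
proof (intro conjI allI impI)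
  fix i j :: nat assume "i < 48" "j < 48"
  then show "\<bar>Y48 i j\<bar> \<le> int (length [4, 44 :: nat])"
    using Y48_entries by simp
next
  fix y :: "nat \<Rightarrow> real" and i j :: nat assume "i < 48" "j < 48"
  then have "design_row_inner (12 * 4) y y Y48 Y48 i j = (if i = j then \<Sum>u<2.
      of_int ([1, 11] ! u) * ([4 * (y 1)\<^sup>2, 4 * (y 2)\<^sup>2] ! u) else 0)"
    unfolding Y48_def
    using Y_pattern_disjoint_ternary Y_pattern_weighing Y_block_orthogonal Y_pattern_anti_amicable
      Y_block_amicable
    by (intro kron_sum_orthogonal[where s = "\<lambda>_ _. -1"]) auto
  then show "(\<Sum>l<48. entry_val y (Y48 i l) * entry_val y (Y48 j l)) =
      (if i = j then \<Sum>t<length [4, 44 :: nat]. of_nat ([4, 44] ! t) * (y (Suc t))\<^sup>2 else 0)"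
    by (simp add: design_row_inner_def numeral_eq_Suc)
qed

lemma X48_Y48_amicable:
  assumes "i < 48" "j < 48"
  shows "design_row_inner 48 x y X48 Y48 i j = design_row_inner 48 y x Y48 X48 i j"
proof -
  have "XY_sign u v \<in> {-1, 1}" for u v
    by (simp add: XY_sign_def)
  then have "design_row_inner (12 * 4) x y X48 Y48 i j = design_row_inner (12 * 4) y x Y48 X48 i j"
    unfolding X48_def Y48_def
    using X_pattern_disjoint_ternary Y_pattern_disjoint_ternary XY_pattern_signed_amicable
      XY_block_signed_amicable assms
    by (intro kron_sum_amicable[where s = XY_sign]) auto
  then show ?thesis by simp
qed

theorem mainTheorem3:
  shows "\<exists>X Y. is_AOD 48 [4, 10, 34] [4, 44] X Y \<and> is_full 48 X Y"
proof (intro exI conjI)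
  show "is_AOD 48 [4, 10, 34] [4, 44] X48 Y48"
    using X48_OD Y48_OD X48_Y48_amicable by (simp add: is_AOD_def design_row_inner_def)
  show "is_full 48 X48 Y48"
    using X48_entries Y48_entries by (simp add: is_full_def)
qed

end
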